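(* Let $U_1,\ldots,U_K$ be mutually commuting unitary operators on a Hilbert space $\mathcal{H}_Q$ of finite dimension $D_Q$, and let $\{|\alpha_k\rangle\}_{k=1}^{D_Q}$ be an orthonormal basis of $\mathcal{H}_Q$ consisting of common eigenvectors of all the $U_j$. If $U_1,\ldots,U_K$ are unambiguously distinguishable, then for every state of the form $|\xi\rangle=\sum_{k=1}^{D_Q}\sqrt{p_k}\,e^{i\theta_k}|\alpha_k\rangle$ with all $p_k>0$, $\sum_k p_k=1$ and real $\theta_k$, the vectors $U_1|\xi\rangle,\ldots,U_K|\xi\rangle$ are linearly independent (so the $U_j$ can be unambiguously discriminated using the probe $|\xi\rangle$ without any ancilla).
   Context: A finite list of unitary operators $U_1,\ldots,U_K$ on a finite-dimensional Hilbert space $\mathcal{H}_Q$ is called unambiguously distinguishable if there exist a finite-dimensional Hilbert space $\mathcal{H}_A$ (an ancilla) and a unit vector $|\psi\rangle\in\mathcal{H}_Q\otimes\mathcal{H}_A$ such that the $K$ output vectors $(U_j\otimes\mathbb{1}_A)|\psi\rangle$ are linearly independent. *)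

theory Defs
  imports Complex_Main
begin

text \<open>A Hilbert space of finite dimension n is modelled as C^n with
  vectors given as functions nat => complex (only indices i < n matter) and
  operators as matrices nat => nat => complex (only indices < n matter).
  The tensor product C^n (x) C^m is modelled with index set {..<n} x {..<m}.\<close>

definition mat_vec :: "nat \<Rightarrow> (nat \<Rightarrow> nat \<Rightarrow> complex) \<Rightarrow> (nat \<Rightarrow> complex) \<Rightarrow> (nat \<Rightarrow> complex)" where
  "mat_vec n U v = (\<lambda>i. \<Sum>j<n. U i j * v j)"

definition inner_c :: "nat \<Rightarrow> (nat \<Rightarrow> complex) \<Rightarrow> (nat \<Rightarrow> complex) \<Rightarrow> complex" where
  "inner_c n v w = (\<Sum>i<n. cnj (v i) * w i)"

definition unitary :: "nat \<Rightarrow> (nat \<Rightarrow> nat \<Rightarrow> complex) \<Rightarrow> bool" where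
  "unitary n U \<longleftrightarrow>
     (\<forall>i<n. \<forall>k<n. (\<Sum>j<n. cnj (U j i) * U j k) = (if i = k then 1 else 0)) \<and>
     (\<forall>i<n. \<forall>k<n. (\<Sum>j<n. U i j * cnj (U k j)) = (if i = k then 1 else 0))"

definition commute :: "nat \<Rightarrow> (nat \<Rightarrow> nat \<Rightarrow> complex) \<Rightarrow> (nat \<Rightarrow> nat \<Rightarrow> complex) \<Rightarrow> bool" where
  "commute n U V \<longleftrightarrow> (\<forall>i<n. \<forall>k<n. (\<Sum>j<n. U i j * V j k) = (\<Sum>j<n. V i j * U j k))"

definition orthonormal_basis :: "nat \<Rightarrow> (nat \<Rightarrow> nat \<Rightarrow> complex) \<Rightarrow> bool" where
  "orthonormal_basis n \<alpha> \<longleftrightarrow>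
     (\<forall>k<n. \<forall>l<n. inner_c n (\<alpha> k) (\<alpha> l) = (if k = l then 1 else 0)) \<and>
     (\<forall>v :: nat \<Rightarrow> complex. \<exists>c. \<forall>i<n. v i = (\<Sum>k<n. c k * \<alpha> k i))"

definition eigenvector :: "nat \<Rightarrow> (nat \<Rightarrow> nat \<Rightarrow> complex) \<Rightarrow> (nat \<Rightarrow> complex) \<Rightarrow> bool" where
  "eigenvector n U v \<longleftrightarrow> (\<exists>i<n. v i \<noteq> 0) \<and> (\<exists>ev. \<forall>i<n. mat_vec n U v i = ev * v i)"

text \<open>The family v 0, ..., v (K-1) of vectors with coordinates indexed by I is linearly
  independent (as a family: repeated vectors make it dependent).\<close>
definition lin_indep_family :: "'i set \<Rightarrow> nat \<Rightarrow> (nat \<Rightarrow> 'i \<Rightarrow> complex) \<Rightarrow> bool" where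
  "lin_indep_family I K v \<longleftrightarrow>
     (\<forall>c :: nat \<Rightarrow> complex. (\<forall>x\<in>I. (\<Sum>j<K. c j * v j x) = 0) \<longrightarrow> (\<forall>j<K. c j = 0))"

definition tensor_id_apply :: "nat \<Rightarrow> (nat \<Rightarrow> nat \<Rightarrow> complex) \<Rightarrow> (nat \<times> nat \<Rightarrow> complex) \<Rightarrow> (nat \<times> nat \<Rightarrow> complex)" where
  "tensor_id_apply n U \<psi> = (\<lambda>(i, a). \<Sum>l<n. U i l * \<psi> (l, a))"

definition unamb_distinguishable :: "nat \<Rightarrow> nat \<Rightarrow> (nat \<Rightarrow> nat \<Rightarrow> nat \<Rightarrow> complex) \<Rightarrow> bool" where
  "unamb_distinguishable n K U \<longleftrightarrow>
     (\<exists>m :: nat. \<exists>\<psi> :: nat \<times> nat \<Rightarrow> complex.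
        (\<Sum>i<n. \<Sum>a<m. (cmod (\<psi> (i, a)))\<^sup>2) = 1 \<and>
        lin_indep_family ({..<n} \<times> {..<m}) K (\<lambda>j. tensor_id_apply n (U j) \<psi>))"

end

theory Submission
  imports Defs
begin

text \<open>In a common eigenbasis \<open>\<alpha>\<close> with eigenvalues \<open>ev j k\<close>, a combination
  \<open>\<Sum>j. d j U j\<close> acts diagonally with entries \<open>\<mu> k = \<Sum>j. d j ev j k\<close>. If it annihilates a
  probe all of whose coordinates in \<open>\<alpha>\<close> are nonzero, every \<open>\<mu> k\<close> vanishes, so the
  combination is the zero operator; then it also annihilates \<open>(U j \<otimes> 1) \<psi>\<close> slice by slice for
  the state \<open>\<psi>\<close> witnessing unambiguous distinguishability, which forces \<open>d = 0\<close>.\<close>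

lemma mat_vec_cong:
  assumes "\<forall>l<n. v l = w l"
  shows "mat_vec n U v = mat_vec n U w"
  using assms unfolding mat_vec_def by (intro ext sum.cong) auto

lemma mat_vec_eigen_expansion:
  assumes eigen: "\<forall>k<n. \<forall>i<n. mat_vec n U (\<alpha> k) i = ev k * \<alpha> k i"
    and i: "i < n"
  shows "mat_vec n U (\<lambda>l. \<Sum>k<n. b k * \<alpha> k l) i = (\<Sum>k<n. b k * ev k * \<alpha> k i)"
proof -
  have "mat_vec n U (\<lambda>l. \<Sum>k<n. b k * \<alpha> k l) i = (\<Sum>l<n. \<Sum>k<n. b k * (U i l * \<alpha> k l))"
    by (simp add: mat_vec_def sum_distrib_left mult_ac)
  also have "\<dots> = (\<Sum>k<n. b k * mat_vec n U (\<alpha> k) i)"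
    by (subst sum.swap) (simp add: mat_vec_def sum_distrib_left)
  also have "\<dots> = (\<Sum>k<n. b k * ev k * \<alpha> k i)"
    using eigen i by (intro sum.cong) auto
  finally show ?thesis .
qed

lemma sum_mat_vec_eigen_expansion:
  assumes eigen: "\<forall>j<K. \<forall>k<n. \<forall>i<n. mat_vec n (U j) (\<alpha> k) i = ev j k * \<alpha> k i"
    and i: "i < n"
  shows "(\<Sum>j<K. d j * mat_vec n (U j) (\<lambda>l. \<Sum>k<n. b k * \<alpha> k l) i)
       = (\<Sum>k<n. b k * (\<Sum>j<K. d j * ev j k) * \<alpha> k i)"
proof -
  have "(\<Sum>j<K. d j * mat_vec n (U j) (\<lambda>l. \<Sum>k<n. b k * \<alpha> k l) i)
      = (\<Sum>j<K. \<Sum>k<n. b k * (d j * ev j k) * \<alpha> k i)"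
  proof (rule sum.cong)
    fix j assume "j \<in> {..<K}"
    then have "mat_vec n (U j) (\<lambda>l. \<Sum>k<n. b k * \<alpha> k l) i = (\<Sum>k<n. b k * ev j k * \<alpha> k i)"
      using eigen by (intro mat_vec_eigen_expansion[OF _ i]) auto
    then show "d j * mat_vec n (U j) (\<lambda>l. \<Sum>k<n. b k * \<alpha> k l) i
             = (\<Sum>k<n. b k * (d j * ev j k) * \<alpha> k i)"
      by (simp add: sum_distrib_left mult_ac)
  qed simp
  also have "\<dots> = (\<Sum>k<n. b k * (\<Sum>j<K. d j * ev j k) * \<alpha> k i)"
    by (subst sum.swap) (simp add: sum_distrib_left sum_distrib_right)
  finally show ?thesis .
qed

lemma orthonormal_basis_coeff_eq_0:
  assumes onb: "orthonormal_basis n \<alpha>"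
    and zero: "\<forall>i<n. (\<Sum>k<n. e k * \<alpha> k i) = 0"
    and l: "l < n"
  shows "e l = 0"
proof -
  have "0 = (\<Sum>i<n. cnj (\<alpha> l i) * (\<Sum>k<n. e k * \<alpha> k i))"
    using zero by simp
  also have "\<dots> = (\<Sum>k<n. e k * inner_c n (\<alpha> l) (\<alpha> k))"
    unfolding inner_c_def sum_distrib_left
    by (subst sum.swap) (simp add: sum_distrib_left mult_ac)
  also have "\<dots> = (\<Sum>k<n. if k = l then e k else 0)"
    using onb l unfolding orthonormal_basis_def by (intro sum.cong) auto
  also have "\<dots> = e l"
    using l by simp
  finally show ?thesis by simp
qed

lemma common_eigenvalues_exist:
  assumes "\<forall>j<K. \<forall>k<n. eigenvector n (U j) (\<alpha> k)"
  obtains ev where "\<forall>j<K. \<forall>k<n. \<forall>i<n. mat_vec n (U j) (\<alpha> k) i = ev j k * \<alpha> k i"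
proof -
  have "\<forall>j k. \<exists>ev. j < K \<longrightarrow> k < n \<longrightarrow> (\<forall>i<n. mat_vec n (U j) (\<alpha> k) i = ev * \<alpha> k i)"
    using assms unfolding eigenvector_def by blast
  then show ?thesis
    using that by metis
qed

lemma eigenvalue_combination_eq_0:
  assumes onb: "orthonormal_basis n \<alpha>"
    and eigen: "\<forall>j<K. \<forall>k<n. \<forall>i<n. mat_vec n (U j) (\<alpha> k) i = ev j k * \<alpha> k i"
    and full_support: "\<forall>k<n. c k \<noteq> 0"
    and annihilates: "\<forall>i<n. (\<Sum>j<K. d j * mat_vec n (U j) (\<lambda>l. \<Sum>k<n. c k * \<alpha> k l) i) = 0"
    and k: "k < n"
  shows "(\<Sum>j<K. d j * ev j k) = 0"
proof -
  have "\<forall>i<n. (\<Sum>k<n. (c k * (\<Sum>j<K. d j * ev j k)) * \<alpha> k i) = 0"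
    using annihilates sum_mat_vec_eigen_expansion[OF eigen] by simp
  then have "c k * (\<Sum>j<K. d j * ev j k) = 0"
    by (rule orthonormal_basis_coeff_eq_0[OF onb _ k])
  then show ?thesis
    using full_support k by simp
qed

lemma eigen_combination_annihilates_all:
  assumes onb: "orthonormal_basis n \<alpha>"
    and eigen: "\<forall>j<K. \<forall>k<n. \<forall>i<n. mat_vec n (U j) (\<alpha> k) i = ev j k * \<alpha> k i"
    and vanish: "\<forall>k<n. (\<Sum>j<K. d j * ev j k) = 0"
    and i: "i < n"
  shows "(\<Sum>j<K. d j * mat_vec n (U j) v i) = 0"
proof -
  obtain b where b: "\<forall>l<n. v l = (\<Sum>k<n. b k * \<alpha> k l)"
    using onb unfolding orthonormal_basis_def by blast
  have "(\<Sum>j<K. d j * mat_vec n (U j) v i)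
      = (\<Sum>j<K. d j * mat_vec n (U j) (\<lambda>l. \<Sum>k<n. b k * \<alpha> k l) i)"
    using mat_vec_cong[OF b] by simp
  also have "\<dots> = (\<Sum>k<n. b k * (\<Sum>j<K. d j * ev j k) * \<alpha> k i)"
    by (rule sum_mat_vec_eigen_expansion[OF eigen i])
  also have "\<dots> = 0"
    using vanish by simp
  finally show ?thesis .
qed

lemma tensor_id_apply_eq_mat_vec:
  "tensor_id_apply n U \<psi> (i, a) = mat_vec n U (\<lambda>l. \<psi> (l, a)) i"
  unfolding tensor_id_apply_def mat_vec_def by simp

lemma lin_indep_full_support_probe:
  assumes onb: "orthonormal_basis n \<alpha>"
    and eig: "\<forall>j<K. \<forall>k<n. eigenvector n (U j) (\<alpha> k)"
    and ud: "unamb_distinguishable n K U"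
    and full_support: "\<forall>k<n. c k \<noteq> 0"
  shows "lin_indep_family {..<n} K (\<lambda>j. mat_vec n (U j) (\<lambda>i. \<Sum>k<n. c k * \<alpha> k i))"
  unfolding lin_indep_family_def
proof (rule allI, rule impI)
  fix d :: "nat \<Rightarrow> complex"
  assume annihilates: "\<forall>i\<in>{..<n}. (\<Sum>j<K. d j * mat_vec n (U j) (\<lambda>i. \<Sum>k<n. c k * \<alpha> k i) i) = 0"
  obtain ev where eigen: "\<forall>j<K. \<forall>k<n. \<forall>i<n. mat_vec n (U j) (\<alpha> k) i = ev j k * \<alpha> k i"
    using common_eigenvalues_exist[OF eig] .
  have vanish: "\<forall>k<n. (\<Sum>j<K. d j * ev j k) = 0"
    using eigenvalue_combination_eq_0[OF onb eigen full_support] annihilates by blast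
  obtain m \<psi> where
    indep: "lin_indep_family ({..<n} \<times> {..<m}) K (\<lambda>j. tensor_id_apply n (U j) \<psi>)"
    using ud unfolding unamb_distinguishable_def by blast
  have "\<forall>x\<in>{..<n} \<times> {..<m}. (\<Sum>j<K. d j * tensor_id_apply n (U j) \<psi> x) = 0"
    using eigen_combination_annihilates_all[OF onb eigen vanish]
    by (auto simp: tensor_id_apply_eq_mat_vec)
  then show "\<forall>j<K. d j = 0"
    using indep unfolding lin_indep_family_def by blast
qed

theorem corollary2:
  fixes n K :: nat
    and U :: "nat \<Rightarrow> nat \<Rightarrow> nat \<Rightarrow> complex"
    and \<alpha> :: "nat \<Rightarrow> nat \<Rightarrow> complex"
  assumes unit: "\<forall>j<K. unitary n (U j)"
    and comm: "\<forall>j<K. \<forall>j'<K. commute n (U j) (U j')"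
    and onb: "orthonormal_basis n \<alpha>"
    and eig: "\<forall>j<K. \<forall>k<n. eigenvector n (U j) (\<alpha> k)"
    and ud: "unamb_distinguishable n K U"
  shows "\<forall>(p :: nat \<Rightarrow> real) (\<theta> :: nat \<Rightarrow> real).
           (\<forall>k<n. p k > 0) \<and> (\<Sum>k<n. p k) = 1 \<longrightarrow>
           lin_indep_family {..<n} K
             (\<lambda>j. mat_vec n (U j)
                (\<lambda>i. \<Sum>k<n. complex_of_real (sqrt (p k)) * exp (\<i> * complex_of_real (\<theta> k)) * \<alpha> k i))"
proof (intro allI impI)
  fix p \<theta> :: "nat \<Rightarrow> real"
  assume "(\<forall>k<n. p k > 0) \<and> (\<Sum>k<n. p k) = 1"
  then have "\<forall>k<n. complex_of_real (sqrt (p k)) * exp (\<i> * complex_of_real (\<theta> k)) \<noteq> 0"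
    by fastforce
  from lin_indep_full_support_probe[OF onb eig ud this]
  show "lin_indep_family {..<n} K
          (\<lambda>j. mat_vec n (U j)
             (\<lambda>i. \<Sum>k<n. complex_of_real (sqrt (p k)) * exp (\<i> * complex_of_real (\<theta> k)) * \<alpha> k i))" .
qed

end
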